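(* Let $\underline{X}$ be an observation from a distribution $P_{(\theta,\underline{\eta})}$ indexed by $(\theta,\underline{\eta})$ in a parameter space $H$, with $\theta$ a real parameter of interest, and fix $\alpha\in[0,1]$. For a confidence interval $C(\underline{X})=[L(\underline{X}),U(\underline{X})]$ for $\theta$, define its modification $C^M$ by $$T(\underline{x},\theta_0)=\min\{\theta_0-L(\underline{x}),\,U(\underline{x})-\theta_0\},\quad h(\underline{x},\theta_0)=\sup_{(\theta,\underline{\eta})\in H,\ \theta=\theta_0}P_{(\theta,\underline{\eta})}\big(T(\underline{X},\theta_0)\le T(\underline{x},\theta_0)\big),$$ $$C^M(\underline{x})=\overline{\{\theta_0: h(\underline{x},\theta_0)>\alpha\}}.$$ Let $C_0(\underline{X})$ be a $1-\alpha$ exact confidence interval for $\theta$, set $C_0^{M0}=C_0$ and $C_0^{M(k+1)}=(C_0^{Mk})^M$ for $k\ge0$, and let $C_0^{M\infty}(\underline{x})=\bigcap_{k=0}^{\infty}C_0^{Mk}(\underline{x})$. Then: (i) $C_0^{Mk}(\underline{x})$, as a set of $\theta$, is nonincreasing in $k\ge0$; (ii) $C_0^{M\infty}(\underline{X})$, which is contained in $C_0^{Mk}(\underline{X})$ for every $k$, is a $1-\alpha$ exact confidence interval; (iii) if $C_0^{Mk}(\underline{X})=C_0^{M(k+1)}(\underline{X})$ for some $k\ge0$, then $C_0^{M\infty}(\underline{X})=C_0^{Mk}(\underline{X})$.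
   Context: For a set $A$ of parameter values in $\mathbb{R}$, $\overline{A}$ denotes the smallest closed simply connected set (closed interval) containing $A$. An interval $C(\underline{X})$ for $\theta$ is "$1-\alpha$ exact" if $\inf_{(\theta,\underline{\eta})\in H}P_{(\theta,\underline{\eta})}(\theta\in C(\underline{X}))\ge1-\alpha$. *)

theory Defs
  imports "HOL-Probability.Probability"
begin

definition interval_hull :: "real set \<Rightarrow> real set" where
  "interval_hull A = \<Inter>{S. closed S \<and> is_interval S \<and> A \<subseteq> S}"

text \<open>Lower and upper endpoints of an interval-valued set C(x) = [L(x),U(x)],
  taken in the extended reals (so that empty or unbounded intervals are allowed).\<close>
definition lower_end :: "real set \<Rightarrow> ereal" where
  "lower_end S = (INF s\<in>S. ereal s)"

definition upper_end :: "real set \<Rightarrow> ereal" where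
  "upper_end S = (SUP s\<in>S. ereal s)"

definition Tstat :: "('x \<Rightarrow> real set) \<Rightarrow> 'x \<Rightarrow> real \<Rightarrow> ereal" where
  "Tstat C x t0 = min (ereal t0 - lower_end (C x)) (upper_end (C x) - ereal t0)"

text \<open>Here a parameter is p :: 'p,
  its component of interest is th p, and the distribution is P p.\<close>
definition hfun :: "'p set \<Rightarrow> ('p \<Rightarrow> real) \<Rightarrow> ('p \<Rightarrow> 'x measure)
    \<Rightarrow> ('x \<Rightarrow> real set) \<Rightarrow> 'x \<Rightarrow> real \<Rightarrow> ereal" where
  "hfun H th P C x t0 =
     (SUP p\<in>{p\<in>H. th p = t0}.
        ereal (measure (P p) {y \<in> space (P p). Tstat C y t0 \<le> Tstat C x t0}))"

definition modif :: "real \<Rightarrow> 'p set \<Rightarrow> ('p \<Rightarrow> real) \<Rightarrow> ('p \<Rightarrow> 'x measure)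
    \<Rightarrow> ('x \<Rightarrow> real set) \<Rightarrow> ('x \<Rightarrow> real set)" where
  "modif \<alpha> H th P C = (\<lambda>x. interval_hull {t0. hfun H th P C x t0 > ereal \<alpha>})"

definition exact_ci :: "real \<Rightarrow> 'p set \<Rightarrow> ('p \<Rightarrow> real) \<Rightarrow> ('p \<Rightarrow> 'x measure)
    \<Rightarrow> ('x \<Rightarrow> real set) \<Rightarrow> bool" where
  "exact_ci \<alpha> H th P C \<longleftrightarrow>
     (INF p\<in>H. ereal (measure (P p) {y \<in> space (P p). th p \<in> C y})) \<ge> ereal (1 - \<alpha>)"

end

theory Submission
  imports Defs
begin

text \<open>If \<open>\<theta>\<^sub>0\<close> lies outside the closed interval \<open>C(x)\<close>, then \<open>T(x,\<theta>\<^sub>0) < 0 \<le> T(y,\<theta>\<^sub>0)\<close>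
  for every \<open>y\<close> with \<open>\<theta>\<^sub>0 \<in> C(y)\<close>, so \<open>h(x,\<theta>\<^sub>0)\<close> is at most the non-coverage
  probability, which exactness bounds by \<open>\<alpha>\<close>; hence \<open>C\<^sup>M \<subseteq> C\<close>. Conversely,
  \<open>\<theta> \<notin> C\<^sup>M(y)\<close> forces \<open>F(T(y,\<theta>)) \<le> \<alpha>\<close>, where \<open>F\<close> is the distribution function of
  \<open>T(X,\<theta>)\<close> under a parameter with first component \<open>\<theta>\<close>, and \<open>F(T(X,\<theta>)) \<le> \<alpha>\<close> has
  probability at most \<open>\<alpha>\<close>; so \<open>C\<^sup>M\<close> is again exact. The iterates thus form a
  decreasing chain of exact closed intervals, and exactness passes to their
  intersection by continuity of measure from above.\<close>

lemma is_interval_Inter: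
  fixes K :: "'a::euclidean_space set set"
  assumes "\<And>S. S \<in> K \<Longrightarrow> is_interval S"
  shows "is_interval (\<Inter>K)"
  using assms unfolding is_interval_def by blast

lemma closed_interval_hull: "closed (interval_hull A)"
  unfolding interval_hull_def by auto

lemma is_interval_interval_hull: "is_interval (interval_hull A)"
  unfolding interval_hull_def by (rule is_interval_Inter) auto

lemma interval_hull_subset: "A \<subseteq> interval_hull A"
  unfolding interval_hull_def by auto

lemma interval_hull_minimal: "closed S \<Longrightarrow> is_interval S \<Longrightarrow> A \<subseteq> S \<Longrightarrow> interval_hull A \<subseteq> S"
  unfolding interval_hull_def by auto

lemma closed_interval_separated:
  fixes S :: "real set"
  assumes "closed S" "is_interval S" "t \<notin> S"
  obtains e where "e > 0" "\<And>s. s \<in> S \<Longrightarrow> t + e \<le> s"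
    | e where "e > 0" "\<And>s. s \<in> S \<Longrightarrow> s \<le> t - e"
proof -
  obtain e where "e > 0" and e: "ball t e \<subseteq> - S"
    using assms(1,3) open_contains_ball[of "- S"] by (auto simp: closed_def)
  have far: "e \<le> \<bar>s - t\<bar>" if "s \<in> S" for s
    using e that by (force simp: dist_real_def)
  have "(\<forall>s\<in>S. t < s) \<or> (\<forall>s\<in>S. s < t)"
    using assms(2,3) unfolding is_interval_1 by (meson linorder_not_less)
  then show ?thesis
  proof
    assume "\<forall>s\<in>S. t < s"
    then show ?thesis
      by (intro that(1)[OF \<open>e > 0\<close>]) (use far in fastforce)
  next
    assume "\<forall>s\<in>S. s < t"
    then show ?thesis
      by (intro that(2)[OF \<open>e > 0\<close>]) (use far in fastforce)
  qed
qed

lemma outside_closed_interval_ends: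
  fixes S :: "real set"
  assumes "closed S" "is_interval S" "t \<notin> S"
  shows "ereal t < lower_end S \<or> upper_end S < ereal t"
  using assms
proof (cases rule: closed_interval_separated)
  case (1 e)
  then have "ereal (t + e) \<le> lower_end S"
    unfolding lower_end_def by (auto intro: INF_greatest)
  moreover have "ereal t < ereal (t + e)" using \<open>e > 0\<close> by simp
  ultimately show ?thesis by (metis order.strict_trans2)
next
  case (2 e)
  then have "upper_end S \<le> ereal (t - e)"
    unfolding upper_end_def by (auto intro: SUP_least)
  moreover have "ereal (t - e) < ereal t" using \<open>e > 0\<close> by simp
  ultimately show ?thesis by (metis order.strict_trans1)
qed

lemma Tstat_nonneg_iff:
  "0 \<le> Tstat C x t \<longleftrightarrow> lower_end (C x) \<le> ereal t \<and> ereal t \<le> upper_end (C x)"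
  unfolding Tstat_def by (cases "lower_end (C x)"; cases "upper_end (C x)") auto

lemma Tstat_nonneg: "t \<in> C x \<Longrightarrow> 0 \<le> Tstat C x t"
  unfolding Tstat_nonneg_iff lower_end_def upper_end_def by (auto intro: INF_lower SUP_upper)

lemma Tstat_neg: "closed (C x) \<Longrightarrow> is_interval (C x) \<Longrightarrow> t \<notin> C x \<Longrightarrow> Tstat C x t < 0"
  using outside_closed_interval_ends[of "C x" t] Tstat_nonneg_iff[of C x t] by auto

lemma ereal_cofinal_incseq:
  fixes A :: "ereal set"
  assumes "A \<noteq> {}"
  obtains f where "incseq f" "range f \<subseteq> A" "\<And>a. a \<in> A \<Longrightarrow> \<exists>n. a \<le> f n"
proof (cases "Sup A \<in> A")
  case True
  then show ?thesis by (intro that[of "\<lambda>_. Sup A"]) (auto intro: Sup_upper)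
next
  case False
  obtain f :: "nat \<Rightarrow> ereal" where f: "incseq f" "range f \<subseteq> A" "Sup A = (SUP n. f n)"
    using Sup_countable_SUP[OF assms] by blast
  have "\<exists>n. a \<le> f n" if "a \<in> A" for a
  proof -
    have "a < (SUP n. f n)" using that False f(3) by (metis Sup_upper order_le_less)
    then show ?thesis by (auto simp: less_SUP_iff intro: less_imp_le)
  qed
  then show ?thesis using f that by blast
qed

text \<open>The distribution function of \<open>T\<close> need not be continuous and the supremum of \<open>T\<close>
  over \<open>S\<close> need not be attained, so \<open>S\<close> is exhausted by a countable increasing chain of
  sublevel sets of \<open>T\<close>, each of probability at most \<open>a\<close>.\<close>

lemma (in prob_space) prob_cdf_transform_le:
  fixes T :: "'a \<Rightarrow> ereal"
  assumes sublevel: "\<And>t. {y \<in> space M. T y \<le> t} \<in> events" and "0 \<le> a"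
  defines "S \<equiv> {y \<in> space M. prob {z \<in> space M. T z \<le> T y} \<le> a}"
  shows "S \<in> events" and "prob S \<le> a"
proof -
  define F where "F t = prob {z \<in> space M. T z \<le> t}" for t
  have F_mono: "F s \<le> F t" if "s \<le> t" for s t
    unfolding F_def using that sublevel by (intro finite_measure_mono) (auto intro: order_trans)
  have "S \<in> events \<and> prob S \<le> a"
  proof (cases "S = {}")
    case True
    then show ?thesis using \<open>0 \<le> a\<close> by simp
  next
    case False
    then obtain f where f: "incseq f" "range f \<subseteq> T ` S" "\<And>b. b \<in> T ` S \<Longrightarrow> \<exists>n. b \<le> f n"
      using ereal_cofinal_incseq[of "T ` S"] by blast
    define B where "B n = {z \<in> space M. T z \<le> f n}" for n
    have FB: "prob (B n) \<le> a" for n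
    proof -
      have "f n \<in> T ` S" using f(2) by auto
      then show ?thesis by (auto simp: B_def S_def)
    qed
    have "S = (\<Union>n. B n)"
    proof
      show "S \<subseteq> (\<Union>n. B n)" using f(3) by (force simp: B_def S_def)
      show "(\<Union>n. B n) \<subseteq> S"
      proof
        fix z assume "z \<in> (\<Union>n. B n)"
        then obtain n where "z \<in> space M" "T z \<le> f n" by (auto simp: B_def)
        moreover have "F (f n) \<le> a" using FB by (simp add: B_def F_def)
        ultimately show "z \<in> S" using F_mono[of "T z" "f n"] by (simp add: S_def F_def)
      qed
    qed
    moreover have "range B \<subseteq> events" using sublevel by (auto simp: B_def)
    moreover have "incseq B" using f(1) by (auto simp: incseq_def B_def intro: order_trans)
    ultimately have "(\<lambda>n. prob (B n)) \<longlonglongrightarrow> prob S" and "S \<in> events"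
      using finite_Lim_measure_incseq by auto
    then show ?thesis using FB by (auto intro: LIMSEQ_le_const2)
  qed
  then show "S \<in> events" and "prob S \<le> a" by auto
qed

lemma funpow_fixpoint_stable:
  assumes "f ((f ^^ k) x) = (f ^^ k) x" and "k \<le> j"
  shows "(f ^^ j) x = (f ^^ k) x"
  using assms(2) by (induction j rule: dec_induct) (use assms(1) in auto)

lemma INT_decseq_eq:
  assumes "decseq A" and "\<And>j. k \<le> j \<Longrightarrow> A j = A k"
  shows "(\<Inter>j. A j) = A k"
proof -
  have "A k \<subseteq> A j" for j
    using assms by (metis decseqD nle_le order_refl)
  then show ?thesis by blast
qed

lemma exact_ci_iff:
  "exact_ci \<alpha> H th P C \<longleftrightarrow> (\<forall>p\<in>H. 1 - \<alpha> \<le> measure (P p) {y \<in> space (P p). th p \<in> C y})"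
  unfolding exact_ci_def le_INF_iff by simp

locale parametric_model =
  fixes H :: "'p set" and th :: "'p \<Rightarrow> real" and P :: "'p \<Rightarrow> 'x measure"
  assumes prob_space_P: "p \<in> H \<Longrightarrow> prob_space (P p)"
begin

lemma hfun_outside_le:
  assumes exact: "exact_ci \<alpha> H th P C"
    and coverage_meas: "\<And>p. p \<in> H \<Longrightarrow> {y \<in> space (P p). t0 \<in> C y} \<in> sets (P p)"
    and Tstat_meas: "\<And>p t. p \<in> H \<Longrightarrow> {y \<in> space (P p). Tstat C y t0 \<le> t} \<in> sets (P p)"
    and "closed (C x)" "is_interval (C x)" "t0 \<notin> C x"
  shows "hfun H th P C x t0 \<le> ereal \<alpha>"
  unfolding hfun_def
proof (rule SUP_least)
  fix p assume p: "p \<in> {p \<in> H. th p = t0}"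
  interpret prob_space "P p" using p prob_space_P by auto
  let ?cov = "{y \<in> space (P p). t0 \<in> C y}"
  have "{y \<in> space (P p). Tstat C y t0 \<le> Tstat C x t0} \<subseteq> space (P p) - ?cov"
    using Tstat_neg[of C x t0] Tstat_nonneg[of t0 C] assms(4-6) by force
  then have "prob {y \<in> space (P p). Tstat C y t0 \<le> Tstat C x t0} \<le> prob (space (P p) - ?cov)"
    using Tstat_meas coverage_meas p by (intro finite_measure_mono) auto
  also have "\<dots> = 1 - prob ?cov"
    using coverage_meas p by (intro prob_compl) auto
  also have "\<dots> \<le> \<alpha>"
    using exact p by (auto simp: exact_ci_iff)
  finally show "ereal (prob {y \<in> space (P p). Tstat C y t0 \<le> Tstat C x t0}) \<le> ereal \<alpha>"
    by simp
qed

lemma modif_subset: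
  assumes exact: "exact_ci \<alpha> H th P C"
    and coverage_meas: "\<And>p t0. p \<in> H \<Longrightarrow> {y \<in> space (P p). t0 \<in> C y} \<in> sets (P p)"
    and Tstat_meas: "\<And>p t0 t. p \<in> H \<Longrightarrow> {y \<in> space (P p). Tstat C y t0 \<le> t} \<in> sets (P p)"
    and "closed (C x)" "is_interval (C x)"
  shows "modif \<alpha> H th P C x \<subseteq> C x"
  unfolding modif_def
proof (rule interval_hull_minimal[OF assms(4,5)])
  show "{t0. ereal \<alpha> < hfun H th P C x t0} \<subseteq> C x"
    using hfun_outside_le[OF exact coverage_meas Tstat_meas assms(4,5)]
    by (metis mem_Collect_eq not_le subsetI)
qed

lemma modif_exact:
  assumes "0 \<le> \<alpha>"
    and coverage_meas: "\<And>p t0. p \<in> H \<Longrightarrow> {y \<in> space (P p). t0 \<in> modif \<alpha> H th P C y} \<in> sets (P p)"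
    and Tstat_meas: "\<And>p t0 t. p \<in> H \<Longrightarrow> {y \<in> space (P p). Tstat C y t0 \<le> t} \<in> sets (P p)"
  shows "exact_ci \<alpha> H th P (modif \<alpha> H th P C)"
  unfolding exact_ci_iff
proof
  fix p assume p: "p \<in> H"
  interpret prob_space "P p" using p prob_space_P by auto
  let ?T = "\<lambda>y. Tstat C y (th p)"
  let ?S = "{y \<in> space (P p). prob {z \<in> space (P p). ?T z \<le> ?T y} \<le> \<alpha>}"
  let ?cov = "{y \<in> space (P p). th p \<in> modif \<alpha> H th P C y}"
  have S: "?S \<in> events" "prob ?S \<le> \<alpha>"
    using prob_cdf_transform_le[of ?T \<alpha>, OF Tstat_meas[OF p] assms(1)] by auto
  have "space (P p) - ?cov \<subseteq> ?S"
  proof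
    fix y assume y: "y \<in> space (P p) - ?cov"
    have "hfun H th P C y (th p) \<le> ereal \<alpha>"
    proof (rule ccontr)
      assume "\<not> hfun H th P C y (th p) \<le> ereal \<alpha>"
      then have "th p \<in> modif \<alpha> H th P C y"
        unfolding modif_def using interval_hull_subset by (force simp: not_le)
      then show False using y by blast
    qed
    moreover have "ereal (prob {z \<in> space (P p). ?T z \<le> ?T y}) \<le> hfun H th P C y (th p)"
      unfolding hfun_def using p by (intro SUP_upper) auto
    ultimately have "ereal (prob {z \<in> space (P p). ?T z \<le> ?T y}) \<le> ereal \<alpha>"
      by (meson order_trans)
    then show "y \<in> ?S" using y by simp
  qed
  then have "prob (space (P p) - ?cov) \<le> \<alpha>"
    using finite_measure_mono[OF _ S(1)] S(2) by (meson order_trans)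
  then show "1 - \<alpha> \<le> prob ?cov"
    using prob_compl[of ?cov] coverage_meas p by simp
qed

lemma exact_ci_INT_decseq:
  assumes exact: "\<And>k. exact_ci \<alpha> H th P (C k)" and dec: "\<And>x. decseq (\<lambda>k. C k x)"
    and coverage_meas: "\<And>p k. p \<in> H \<Longrightarrow> {y \<in> space (P p). th p \<in> C k y} \<in> sets (P p)"
  shows "exact_ci \<alpha> H th P (\<lambda>x. \<Inter>k. C k x)"
  unfolding exact_ci_iff
proof
  fix p assume p: "p \<in> H"
  interpret prob_space "P p" using p prob_space_P by auto
  define A where "A k = {y \<in> space (P p). th p \<in> C k y}" for k
  have "decseq A" using dec by (auto simp: decseq_def A_def)
  moreover have "range A \<subseteq> events" using coverage_meas p by (auto simp: A_def)
  moreover have "(\<Inter>k. A k) = {y \<in> space (P p). th p \<in> (\<Inter>k. C k y)}" by (auto simp: A_def)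
  ultimately have "(\<lambda>k. prob (A k)) \<longlonglongrightarrow> prob {y \<in> space (P p). th p \<in> (\<Inter>k. C k y)}"
    using finite_Lim_measure_decseq by metis
  moreover have "1 - \<alpha> \<le> prob (A k)" for k
    using exact p by (auto simp: exact_ci_iff A_def)
  ultimately show "1 - \<alpha> \<le> prob {y \<in> space (P p). th p \<in> (\<Inter>k. C k y)}"
    by (intro LIMSEQ_le_const) auto
qed

end

locale iterated_modification = parametric_model +
  fixes \<alpha> :: real and C0 :: "'x \<Rightarrow> real set"
  assumes alpha_nonneg: "0 \<le> \<alpha>"
    and closed_C0: "closed (C0 x)" and is_interval_C0: "is_interval (C0 x)"
    and exact_C0: "exact_ci \<alpha> H th P C0"
    and coverage_measurable:
      "p \<in> H \<Longrightarrow> {y \<in> space (P p). t0 \<in> (modif \<alpha> H th P ^^ k) C0 y} \<in> sets (P p)"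
    and Tstat_measurable:
      "p \<in> H \<Longrightarrow> {y \<in> space (P p). Tstat ((modif \<alpha> H th P ^^ k) C0) y t0 \<le> t} \<in> sets (P p)"
begin

abbreviation iterate :: "nat \<Rightarrow> 'x \<Rightarrow> real set" where
  "iterate k \<equiv> (modif \<alpha> H th P ^^ k) C0"

lemma closed_iterate: "closed (iterate k x)"
  by (cases k) (simp_all add: closed_C0 modif_def closed_interval_hull)

lemma is_interval_iterate: "is_interval (iterate k x)"
  by (cases k) (simp_all add: is_interval_C0 modif_def is_interval_interval_hull)

lemma exact_iterate: "exact_ci \<alpha> H th P (iterate k)"
proof (cases k)
  case 0
  then show ?thesis using exact_C0 by simp
next
  case (Suc j)
  have "exact_ci \<alpha> H th P (modif \<alpha> H th P (iterate j))"
    by (rule modif_exact[OF alpha_nonneg])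
      (use coverage_measurable[where k = "Suc j"] Tstat_measurable in simp_all)
  then show ?thesis by (simp add: Suc)
qed

lemma iterate_Suc_subset: "iterate (Suc k) x \<subseteq> iterate k x"
  using modif_subset[OF exact_iterate coverage_measurable Tstat_measurable
      closed_iterate is_interval_iterate]
  by simp

lemma decseq_iterate: "decseq (\<lambda>k. iterate k x)"
  using iterate_Suc_subset by (intro decseq_SucI)

lemma exact_Inter_iterates: "exact_ci \<alpha> H th P (\<lambda>x. \<Inter>k. iterate k x)"
  by (rule exact_ci_INT_decseq[OF exact_iterate decseq_iterate coverage_measurable])

lemma Inter_iterates_eq_fixpoint:
  assumes "iterate k = iterate (Suc k)"
  shows "(\<lambda>x. \<Inter>j. iterate j x) = iterate k"
proof -
  have "modif \<alpha> H th P (iterate k) = iterate k"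
    using assms by simp
  then have eventually_const: "iterate j = iterate k" if "k \<le> j" for j
    using that by (rule funpow_fixpoint_stable)
  have "(\<Inter>j. iterate j x) = iterate k x" for x
    using INT_decseq_eq[OF decseq_iterate] eventually_const by metis
  then show ?thesis by (simp add: fun_eq_iff)
qed

end

theorem theorem3:
  fixes H :: "'p set" and th :: "'p \<Rightarrow> real" and P :: "'p \<Rightarrow> 'x measure"
    and \<alpha> :: real and C0 :: "'x \<Rightarrow> real set"
  assumes prob: "\<forall>p\<in>H. prob_space (P p)"
    and alpha: "0 \<le> \<alpha>" "\<alpha> \<le> 1"
    and interval: "\<forall>x. \<exists>L U. L \<le> U \<and> C0 x = {L..U}"
    and exact0: "exact_ci \<alpha> H th P C0"
    and meas: "\<forall>p\<in>H. \<forall>k t0. \<forall>t::ereal.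
        {y \<in> space (P p). t0 \<in> ((modif \<alpha> H th P) ^^ k) C0 y} \<in> sets (P p) \<and>
        {y \<in> space (P p). Tstat (((modif \<alpha> H th P) ^^ k) C0) y t0 \<le> t} \<in> sets (P p)"
  defines "CM \<equiv> \<lambda>k. ((modif \<alpha> H th P) ^^ k) C0"
    and "Cinf \<equiv> \<lambda>x. \<Inter>k. ((modif \<alpha> H th P) ^^ k) C0 x"
  shows "(\<forall>k x. CM (Suc k) x \<subseteq> CM k x)
       \<and> (\<forall>k x. Cinf x \<subseteq> CM k x)
       \<and> (\<forall>x. closed (Cinf x) \<and> is_interval (Cinf x))
       \<and> exact_ci \<alpha> H th P Cinf
       \<and> (\<forall>k. CM k = CM (Suc k) \<longrightarrow> Cinf = CM k)"
proof -
  have C0: "closed (C0 x) \<and> is_interval (C0 x)" for x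
    using interval by (metis closed_atLeastAtMost is_interval_cc)
  interpret iterated_modification H th P \<alpha> C0
    using prob alpha(1) exact0 meas C0
    by (simp add: iterated_modification_def iterated_modification_axioms_def parametric_model_def)
  show ?thesis
    unfolding CM_def Cinf_def
    using iterate_Suc_subset closed_iterate is_interval_iterate exact_Inter_iterates
      Inter_iterates_eq_fixpoint
    by (auto intro!: closed_INT is_interval_Inter)
qed

end
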